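(* Let $q\not\equiv0\pmod3$, $\mu\in\mathbb{F}_q$, and let $\ell_\mu$ be the line through $\mathbf{P}(0,\mu,0,1)$ and $\mathbf{P}(1,0,1,0)$. Then: (i) $\ell_\mu$ is an imaginary axis if and only if $q$ is odd, $q\equiv-1\pmod3$ and $\mu=1/9$; (ii) $\ell_\mu$ is a real axis if and only if $q$ is odd, $q\equiv1\pmod3$ and $\mu=1/9$.
   Context: Points of $\mathrm{PG}(3,q)$ are written $\mathbf{P}(x_0,x_1,x_2,x_3)$ over $\mathbb{F}_q$. For $t$ in $\mathbb{F}_q$ or $\mathbb{F}_{q^2}$ the osculating plane $\pi_{osc}(t)$ of the twisted cubic $\{\mathbf{P}(t^3,t^2,t,1)\}\cup\{\mathbf{P}(1,0,0,0)\}$ is the plane $x_0-3tx_1+3t^2x_2-t^3x_3=0$, and $\pi_{osc}(\infty)$ is $x_3=0$. A real axis is a line $\pi_{osc}(t_1)\cap\pi_{osc}(t_2)$ with $t_1\ne t_2$ in $\mathbb{F}_q\cup\{\infty\}$; an imaginary axis is a line of $\mathrm{PG}(3,q)$ of the form $\pi_{osc}(t_1)\cap\pi_{osc}(t_2)$ with $t_1,t_2=t_1^q\in\mathbb{F}_{q^2}\setminus\mathbb{F}_q$. *)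

theory Defs
  imports Main "HOL-Library.Cardinality"
begin

text \<open>Vectors of the underlying 4-dimensional space over a field; a line of PG(3,q)
  is represented by the corresponding 2-dimensional subspace (as a set of vectors).\<close>

type_synonym 'a vec4 = "'a \<times> 'a \<times> 'a \<times> 'a"

definition map4 :: "('a \<Rightarrow> 'b) \<Rightarrow> 'a vec4 \<Rightarrow> 'b vec4" where
  "map4 f x = (case x of (x0, x1, x2, x3) \<Rightarrow> (f x0, f x1, f x2, f x3))"

text \<open>Osculating plane pi_osc(t); the parameter None stands for t = infinity.\<close>
definition osc_plane :: "'a::field option \<Rightarrow> 'a vec4 set" where
  "osc_plane t = {(x0, x1, x2, x3).
     (case t of None \<Rightarrow> x3 = 0
      | Some s \<Rightarrow> x0 - 3 * s * x1 + 3 * s^2 * x2 - s^3 * x3 = 0)}"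

definition ell :: "'a::field \<Rightarrow> 'a vec4 set" where
  "ell mu = {(b, a * mu, b, a) | a b. True}"

definition real_axis :: "'a::field vec4 set \<Rightarrow> bool" where
  "real_axis L \<longleftrightarrow> (\<exists>t1 t2. t1 \<noteq> t2 \<and> L = osc_plane t1 \<inter> osc_plane t2)"

definition field_emb :: "('a::field \<Rightarrow> 'b::field) \<Rightarrow> bool" where
  "field_emb \<phi> \<longleftrightarrow> \<phi> 1 = 1 \<and> (\<forall>x y. \<phi> (x + y) = \<phi> x + \<phi> y) \<and> (\<forall>x y. \<phi> (x * y) = \<phi> x * \<phi> y)"

text \<open>Imaginary axis: a line of PG(3,q) (its vectors over F_q) whose extension is
  pi_osc(t) \<inter> pi_osc(t^q) with t in F_{q^2} \ F_q; here \<phi> embeds F_q into F_{q^2}.\<close>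
definition imag_axis :: "('a::{finite,field} \<Rightarrow> 'b::field) \<Rightarrow> 'a vec4 set \<Rightarrow> bool" where
  "imag_axis \<phi> L \<longleftrightarrow> (\<exists>t. t \<notin> range \<phi> \<and>
     L = {x. map4 \<phi> x \<in> osc_plane (Some t) \<inter> osc_plane (Some (t ^ card (UNIV :: 'a set)))})"

end

theory Submission
  imports Defs "Berlekamp_Zassenhaus.Finite_Field"
begin

(* A plane pi_osc(t) contains l_mu iff t is finite, 3 t^2 = -1 and mu = 1/9 (test the two points
   spanning l_mu); conversely, if 2 <> 0 and 3 t^2 = -1, then pi_osc(t) and pi_osc(-t) meet exactly
   in l_(1/9).  So l_mu is a real axis iff mu = 1/9, q is odd and 3 s^2 = -1 is solvable in F_q.
   It is an imaginary axis iff mu = 1/9 and that equation is unsolvable in F_q: then its roots t in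
   F_(q^2) lie outside F_q while t^2 lies in F_q, which forces t^q = -t.  Finally 3 s^2 = -1 is
   solvable in F_q iff q is even or F_q has a primitive cube root of unity, e.g. w = (3 s - 1)/2,
   i.e. iff q is even or q = 1 (mod 3). *)

section \<open>Finite fields\<close>

lemma eq_uminus_iff: "(x::'a::field) = - x \<longleftrightarrow> (2::'a) = 0 \<or> x = 0"
  by (simp add: eq_neg_iff_add_eq_0 flip: mult_2)

lemma diff_add_eq_0_iff:
  fixes a b s :: "'a::field"
  assumes "(2::'a) \<noteq> 0" and "s \<noteq> 0"
  shows "a - s * b = 0 \<and> a + s * b = 0 \<longleftrightarrow> a = 0 \<and> b = 0"
proof
  assume "a - s * b = 0 \<and> a + s * b = 0"
  then have h1: "a - s * b = 0" and h2: "a + s * b = 0" by blast+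
  have "2 * a = (a - s * b) + (a + s * b)" by (simp add: algebra_simps)
  also have "\<dots> = 0" by (simp only: h1 h2 add_0_right)
  finally have "2 * a = 0" .
  have "2 * (s * b) = (a + s * b) - (a - s * b)" by (simp add: algebra_simps)
  also have "\<dots> = 0" by (simp only: h1 h2 diff_self)
  finally have "2 * (s * b) = 0" .
  with \<open>2 * a = 0\<close> assms show "a = 0 \<and> b = 0" by simp
qed simp

lemma card_UNIV_ge_two: "2 \<le> CARD('a::{finite,zero_neq_one})"
proof -
  have "card {0::'a, 1} \<le> CARD('a)" by (rule card_mono) simp_all
  then show ?thesis by simp
qed

lemma of_nat_CARD_eq_0: "of_nat CARD('a) = (0::'a::{finite,ring_1})"
proof -
  have "(\<Sum>y::'a\<in>UNIV. y + 1) = (\<Sum>y\<in>UNIV. y)"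
    by (rule sum.reindex_bij_witness[of _ "\<lambda>y. y - 1" "\<lambda>y. y + 1"]) auto
  then show ?thesis by (simp add: sum.distrib)
qed

lemma prime_dvd_card_if_of_nat_eq_0:
  assumes "prime p" and "of_nat p = (0::'a::{finite,ring_1})"
  shows "p dvd CARD('a)"
proof -
  have "CHAR('a) dvd p" using assms(2) by (simp add: of_nat_eq_0_iff_char_dvd)
  then have "CHAR('a) = p" using assms(1) CHAR_not_1 by (auto simp: prime_nat_iff)
  then show ?thesis using of_nat_CARD_eq_0[where 'a='a] by (simp add: of_nat_eq_0_iff_char_dvd)
qed

lemma power_card_minus_one_eq_1:
  fixes x :: "'a::{finite,field}"
  assumes "x \<noteq> 0"
  shows "x ^ (CARD('a) - 1) = 1"
proof -
  let ?U = "UNIV - {0::'a}"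
  have "(\<Prod>y\<in>?U. y) = (\<Prod>y\<in>?U. x * y)"
    by (rule prod.reindex_bij_witness[of _ "\<lambda>y. x * y" "\<lambda>y. y / x"]) (use assms in auto)
  also have "\<dots> = x ^ card ?U * (\<Prod>y\<in>?U. y)" by (simp add: prod.distrib)
  finally have "1 * (\<Prod>y\<in>?U. y) = x ^ card ?U * (\<Prod>y\<in>?U. y)" by simp
  moreover have "(\<Prod>y\<in>?U. y) \<noteq> 0" by simp
  ultimately have "x ^ card ?U = 1" by (metis mult_right_cancel)
  then show ?thesis by (simp add: card_Diff_singleton)
qed

lemma power_card_eq_self: "x ^ CARD('a) = (x::'a::{finite,field})"
proof (cases "x = 0")
  case False
  have "x ^ CARD('a) = x * x ^ (CARD('a) - 1)" by (simp flip: power_Suc)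
  with power_card_minus_one_eq_1[OF False] show ?thesis by simp
qed simp

lemma two_neq_zero_iff_odd_card: "(2::'a::{finite,field}) \<noteq> 0 \<longleftrightarrow> odd CARD('a)"
proof
  assume two: "(2::'a) \<noteq> 0"
  show "odd CARD('a)"
  proof
    assume "even CARD('a)"
    then have "odd (CARD('a) - 1)" using card_UNIV_ge_two[where 'a='a] by simp
    then have "(-1::'a) = 1" using power_card_minus_one_eq_1[of "-1::'a"] by simp
    then have "(2::'a) = 0" by (metis one_add_one add.right_inverse)
    with two show False ..
  qed
next
  assume "odd CARD('a)"
  then show "(2::'a) \<noteq> 0" using prime_dvd_card_if_of_nat_eq_0[of 2, where 'a='a] by auto
qed

lemma
  fixes c :: "'a::idom"
  assumes "0 < n"
  shows finite_roots_power_eq: "finite {x. x ^ n = c}"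
    and card_roots_power_eq_le: "card {x. x ^ n = c} \<le> n"
proof -
  define p where "p = monom 1 n + [:- c:]"
  have roots: "{x. x ^ n = c} = {x. poly p x = 0}" by (auto simp: p_def poly_monom)
  have deg: "degree p = n" using assms by (simp add: p_def degree_add_eq_left degree_monom_eq)
  then have "p \<noteq> 0" using assms by auto
  then show "finite {x. x ^ n = c}" and "card {x. x ^ n = c} \<le> n"
    using poly_roots_finite card_poly_roots_bound deg roots by metis+
qed

lemma ex_nontrivial_cube_root_of_unity_iff:
  "(\<exists>w::'a::{finite,field}. w ^ 3 = 1 \<and> w \<noteq> 1) \<longleftrightarrow> CARD('a) mod 3 = 1"
proof
  assume "\<exists>w::'a. w ^ 3 = 1 \<and> w \<noteq> 1"
  then obtain w :: 'a where w: "w ^ 3 = 1" "w \<noteq> 1" by blast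
  define r where "r = (CARD('a) - 1) mod 3"
  have qr: "CARD('a) - 1 = 3 * ((CARD('a) - 1) div 3) + r" by (simp add: r_def)
  have "w ^ (CARD('a) - 1) = w ^ r" by (subst qr) (simp add: power_add power_mult w(1))
  moreover have "w \<noteq> 0" using w(1) by auto
  ultimately have wr: "w ^ r = 1" using power_card_minus_one_eq_1[of w] by simp
  have "r \<noteq> 1" using wr w(2) by auto
  moreover have "r \<noteq> 2"
  proof
    assume "r = 2"
    then have "w ^ 3 = w" using wr by (simp add: power3_eq_cube power2_eq_square mult.assoc)
    with w show False by simp
  qed
  ultimately have "r = 0" unfolding r_def by linarith
  then show "CARD('a) mod 3 = 1" using card_UNIV_ge_two[where 'a='a] unfolding r_def by presburger
next
  assume card: "CARD('a) mod 3 = 1"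
  define m where "m = (CARD('a) - 1) div 3"
  have q: "CARD('a) - 1 = 3 * m" and "0 < m"
    using card card_UNIV_ge_two[where 'a='a] unfolding m_def by presburger+
  have "\<not> UNIV - {0} \<subseteq> {x::'a. x ^ m = 1}"
  proof
    assume "UNIV - {0} \<subseteq> {x::'a. x ^ m = 1}"
    then have "card (UNIV - {0::'a}) \<le> card {x::'a. x ^ m = 1}"
      by (intro card_mono finite_roots_power_eq \<open>0 < m\<close>)
    also have "\<dots> \<le> m" by (rule card_roots_power_eq_le[OF \<open>0 < m\<close>])
    finally show False using q \<open>0 < m\<close> by (simp add: card_Diff_singleton)
  qed
  then obtain x :: 'a where "x \<noteq> 0" and "x ^ m \<noteq> 1" by blast
  moreover have "(x ^ m) ^ 3 = 1"
    using power_card_minus_one_eq_1[OF \<open>x \<noteq> 0\<close>] q by (simp add: power_mult[symmetric] mult.commute)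
  ultimately show "\<exists>w::'a. w ^ 3 = 1 \<and> w \<noteq> 1" by blast
qed

lemma ex_three_mult_square_eq_minus_one_iff_cube_root:
  assumes "(2::'a::field) \<noteq> 0"
  shows "(\<exists>s::'a. 3 * s ^ 2 = -1) \<longleftrightarrow> (\<exists>w::'a. w ^ 3 = 1 \<and> w \<noteq> 1)"
proof
  assume "\<exists>s::'a. 3 * s ^ 2 = -1"
  then obtain s :: 'a where s: "3 * s ^ 2 = -1" by blast
  define w where "w = (3 * s - 1) / 2"
  have two_w: "2 * w = 3 * s - 1" using assms by (simp add: w_def)
  have "(2 * 2) * (w ^ 2 + w + 1) = (2 * w) ^ 2 + 2 * (2 * w) + 4"
    by (simp add: algebra_simps power2_eq_square)
  also have "\<dots> = 3 * (3 * s ^ 2 + 1)" unfolding two_w by (simp add: algebra_simps power2_eq_square)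
  also have "\<dots> = 0" using s by simp
  finally have w2: "w ^ 2 + w + 1 = 0" using assms by (metis mult_eq_0_iff)
  have "w ^ 3 - 1 = (w - 1) * (w ^ 2 + w + 1)"
    by (simp add: algebra_simps power2_eq_square power3_eq_cube)
  then have "w ^ 3 = 1" using w2 by simp
  moreover have "w \<noteq> 1" using w2 s by auto
  ultimately show "\<exists>w::'a. w ^ 3 = 1 \<and> w \<noteq> 1" by blast
next
  assume "\<exists>w::'a. w ^ 3 = 1 \<and> w \<noteq> 1"
  then obtain w :: 'a where w: "w ^ 3 = 1" "w \<noteq> 1" by blast
  have "(w - 1) * (w ^ 2 + w + 1) = 0"
    using w(1) by (simp add: algebra_simps power2_eq_square power3_eq_cube)
  then have w2: "w ^ 2 + w + 1 = 0" using w(2) by simp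
  have "(3::'a) \<noteq> 0"
  proof
    assume "(3::'a) = 0"
    then have "(w - 1) ^ 2 = w ^ 2 + w + 1" by (simp add: algebra_simps power2_eq_square)
    with w2 w(2) show False by simp
  qed
  define s where "s = (2 * w + 1) / 3"
  have "3 * s = 2 * w + 1" using \<open>(3::'a) \<noteq> 0\<close> by (simp add: s_def)
  have "3 * (3 * s ^ 2) = (3 * s) ^ 2" by (simp add: power2_eq_square)
  also have "\<dots> = (2 * w + 1) ^ 2" unfolding \<open>3 * s = 2 * w + 1\<close> ..
  also have "\<dots> = 4 * (w ^ 2 + w + 1) - 3" by (simp add: algebra_simps power2_eq_square)
  also have "\<dots> = 3 * -1" using w2 by simp
  finally have "3 * s ^ 2 = -1" using \<open>(3::'a) \<noteq> 0\<close> by (metis mult_left_cancel)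
  then show "\<exists>s::'a. 3 * s ^ 2 = -1" by blast
qed

lemma ex_three_mult_square_eq_minus_one_iff:
  "(\<exists>s::'a::{finite,field}. 3 * s ^ 2 = -1) \<longleftrightarrow> even CARD('a) \<or> CARD('a) mod 3 = 1"
proof (cases "(2::'a) = 0")
  case True
  have "(3::'a) * 1 ^ 2 - (-1) = 2 * 2" by simp
  then have "(3::'a) * 1 ^ 2 = -1" using True by simp
  with True show ?thesis using two_neq_zero_iff_odd_card[where 'a='a] by blast
next
  case False
  then show ?thesis
    using ex_three_mult_square_eq_minus_one_iff_cube_root ex_nontrivial_cube_root_of_unity_iff
      two_neq_zero_iff_odd_card by blast
qed

lemma card_nonzero_squares:
  assumes "odd CARD('a::{finite,field})"
  shows "2 * card ((\<lambda>x::'a. x ^ 2) ` (UNIV - {0})) = CARD('a) - 1"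
proof -
  let ?S = "(\<lambda>x::'a. x ^ 2) ` (UNIV - {0})"
  have two: "(2::'a) \<noteq> 0" using assms two_neq_zero_iff_odd_card by blast
  have fibre: "card {x. x ^ 2 = y} = 2" if "y \<in> ?S" for y
  proof -
    obtain r :: 'a where r: "r \<noteq> 0" "y = r ^ 2" using \<open>y \<in> ?S\<close> by auto
    have "{x. x ^ 2 = y} = {r, -r}" using r by (auto simp: power2_eq_iff)
    moreover have "r \<noteq> -r" using two r by (simp add: eq_uminus_iff)
    ultimately show ?thesis by simp
  qed
  have "UNIV - {0} = (\<Union>y\<in>?S. {x. x ^ 2 = y})" by auto
  then have "card (UNIV - {0::'a}) = card (\<Union>y\<in>?S. {x. x ^ 2 = y})" by simp
  also have "\<dots> = (\<Sum>y\<in>?S. card {x. x ^ 2 = y})" by (rule card_UN_disjoint) auto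
  also have "\<dots> = 2 * card ?S" using fibre by simp
  finally show ?thesis by (simp add: card_Diff_singleton)
qed

lemma ex_sqrt_if_power_half_card_eq_1:
  assumes "odd CARD('a::{finite,field})" and "(c::'a) ^ ((CARD('a) - 1) div 2) = 1"
  shows "\<exists>r. r ^ 2 = c"
proof -
  define m where "m = (CARD('a) - 1) div 2"
  have q: "CARD('a) - 1 = 2 * m" and "0 < m"
    using assms(1) card_UNIV_ge_two[where 'a='a] unfolding m_def by presburger+
  let ?S = "(\<lambda>x::'a. x ^ 2) ` (UNIV - {0})"
  let ?R = "{x::'a. x ^ m = 1}"
  have "?S \<subseteq> ?R"
  proof
    fix y assume "y \<in> ?S"
    then obtain r :: 'a where "r \<noteq> 0" and "y = r ^ 2" by auto
    then show "y \<in> ?R" using power_card_minus_one_eq_1[of r] q by (simp add: power_mult[symmetric])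
  qed
  moreover have "card ?R \<le> card ?S"
    using card_roots_power_eq_le[OF \<open>0 < m\<close>, of "1::'a"] card_nonzero_squares[OF assms(1)] q
    by simp
  ultimately have "?S = ?R" using finite_roots_power_eq[OF \<open>0 < m\<close>] by (metis card_seteq)
  moreover have "c \<in> ?R" using assms(2) by (simp add: m_def)
  ultimately have "c \<in> ?S" by simp
  then show ?thesis by auto
qed

section \<open>Embeddings of finite fields\<close>

lemma field_hom_if_field_emb:
  assumes "field_emb \<phi>"
  shows "field_hom \<phi>"
proof -
  have add: "\<phi> (x + y) = \<phi> x + \<phi> y" and mult: "\<phi> (x * y) = \<phi> x * \<phi> y" and one: "\<phi> 1 = 1" for x y
    using assms by (simp_all add: field_emb_def)
  have "\<phi> 0 = 0" using add[of 0 0] by (metis add_0 add_cancel_right_right)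
  with add mult one show ?thesis by unfold_locales auto
qed

lemma range_field_emb:
  fixes \<phi> :: "'a::{finite,field} \<Rightarrow> 'b::field"
  assumes "field_emb \<phi>"
  shows "range \<phi> = {y. y ^ CARD('a) = y}"
proof -
  interpret field_hom \<phi> using assms by (rule field_hom_if_field_emb)
  let ?F = "{y::'b. y ^ CARD('a) = y}" and ?R = "{y::'b. y ^ (CARD('a) - 1) = 1}"
  have q: "0 < CARD('a) - 1" using card_UNIV_ge_two[where 'a='a] by simp
  have "?F \<subseteq> insert 0 ?R"
  proof
    fix y assume "y \<in> ?F"
    moreover have "y ^ CARD('a) = y * y ^ (CARD('a) - 1)" by (simp flip: power_Suc)
    ultimately show "y \<in> insert 0 ?R" by auto
  qed
  moreover have "finite (insert 0 ?R)" using finite_roots_power_eq[OF q] by simp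
  ultimately have fin: "finite ?F" by (rule finite_subset)
  have "card ?F \<le> card (insert 0 ?R)"
    using \<open>?F \<subseteq> insert 0 ?R\<close> \<open>finite (insert 0 ?R)\<close> by (rule card_mono[rotated])
  also have "\<dots> \<le> Suc (CARD('a) - 1)"
    using card_insert_le_m1[OF _ card_roots_power_eq_le[OF q]] q by simp
  finally have "card ?F \<le> CARD('a)" by simp
  moreover have "range \<phi> \<subseteq> ?F" by (auto simp flip: hom_power simp: power_card_eq_self)
  moreover have "card (range \<phi>) = CARD('a)" using inj_f by (simp add: card_image)
  ultimately show ?thesis using card_seteq[OF fin] by metis
qed

lemma power_card_eq_uminus_if_square_in_range:
  fixes \<phi> :: "'a::{finite,field} \<Rightarrow> 'b::field"
  assumes emb: "field_emb \<phi>" and "t \<notin> range \<phi>" and "t ^ 2 \<in> range \<phi>"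
  shows "t ^ CARD('a) = - t"
proof -
  have "(t ^ CARD('a)) ^ 2 = (t ^ 2) ^ CARD('a)" by (simp flip: power_mult add: mult.commute)
  also have "\<dots> = t ^ 2" using assms(3) range_field_emb[OF emb] by blast
  finally have "t ^ CARD('a) = t \<or> t ^ CARD('a) = - t" by (simp add: power2_eq_iff)
  moreover have "t ^ CARD('a) \<noteq> t" using assms(2) range_field_emb[OF emb] by blast
  ultimately show ?thesis by blast
qed

lemma ex_sqrt_in_quadratic_extension:
  fixes \<phi> :: "'a::{finite,field} \<Rightarrow> 'b::{finite,field}"
  assumes emb: "field_emb \<phi>" and card: "CARD('b) = CARD('a) ^ 2" and odd: "odd CARD('a)"
  shows "\<exists>t. t ^ 2 = \<phi> c"
proof -
  interpret field_hom \<phi> using emb by (rule field_hom_if_field_emb)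
  show ?thesis
  proof (cases "c = 0")
    case True
    then show ?thesis by (intro exI[of _ 0]) simp
  next
    case False
    have "(CARD('b) - 1) div 2 = (CARD('a) - 1) * ((CARD('a) + 1) div 2)"
      using odd unfolding card by (auto elim!: oddE simp: power2_eq_square algebra_simps)
    then have "\<phi> c ^ ((CARD('b) - 1) div 2) = \<phi> ((c ^ (CARD('a) - 1)) ^ ((CARD('a) + 1) div 2))"
      by (simp add: hom_power power_mult)
    also have "\<dots> = 1" using power_card_minus_one_eq_1[OF False] by simp
    finally have "\<phi> c ^ ((CARD('b) - 1) div 2) = 1" .
    moreover have "odd CARD('b)" using odd card by simp
    ultimately show ?thesis using ex_sqrt_if_power_half_card_eq_1 by blast
  qed
qed

lemma mem_range_field_emb_iff_ex_root:
  fixes \<phi> :: "'a::field \<Rightarrow> 'b::field"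
  assumes "field_emb \<phi>" and t: "3 * t ^ 2 = -1"
  shows "t \<in> range \<phi> \<longleftrightarrow> (\<exists>s::'a. 3 * s ^ 2 = -1)"
proof
  interpret field_hom \<phi> using assms(1) by (rule field_hom_if_field_emb)
  show "\<exists>s::'a. 3 * s ^ 2 = -1" if "t \<in> range \<phi>"
  proof -
    obtain s where "t = \<phi> s" using \<open>t \<in> range \<phi>\<close> by blast
    then have "\<phi> (3 * s ^ 2) = \<phi> (-1)" using t by (simp add: hom_distribs)
    then show ?thesis using inj_f by (auto dest: injD)
  qed
  show "t \<in> range \<phi>" if root: "\<exists>s::'a. 3 * s ^ 2 = -1"
  proof -
    obtain s :: 'a where s: "3 * s ^ 2 = -1" using root by blast
    have "3 * \<phi> s ^ 2 = 3 * t ^ 2" using arg_cong[OF s, of \<phi>] t by (simp add: hom_distribs)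
    moreover have "(3::'b) \<noteq> 0" using t by auto
    ultimately have "t = \<phi> s \<or> t = \<phi> (- s)" by (auto simp: power2_eq_iff hom_uminus)
    then show ?thesis by blast
  qed
qed

section \<open>Osculating planes through the line\<close>

lemma mem_ell_iff: "(x0, x1, x2, x3) \<in> ell \<mu> \<longleftrightarrow> x0 = x2 \<and> x1 = x3 * \<mu>"
  by (auto simp: ell_def)

lemma ell_base_points: "(1, 0, 1, 0) \<in> ell \<mu>" "(0, \<mu>, 0, 1) \<in> ell \<mu>"
  by (simp_all add: mem_ell_iff)

lemma mem_osc_plane_Some_iff:
  "(x0, x1, x2, x3) \<in> osc_plane (Some s) \<longleftrightarrow> x0 - 3 * s * x1 + 3 * s ^ 2 * x2 - s ^ 3 * x3 = 0"
  by (simp add: osc_plane_def)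

lemma osc_plane_through_base_points:
  fixes \<mu> :: "'a::field"
  assumes "(1, 0, 1, 0) \<in> osc_plane t" and "(0, \<mu>, 0, 1) \<in> osc_plane t"
  shows "\<exists>s. t = Some s \<and> 3 * s ^ 2 = -1 \<and> \<mu> = 1/9"
proof (cases t)
  case None
  with assms(2) show ?thesis by (simp add: osc_plane_def)
next
  case (Some s)
  from assms(1) have s: "1 + 3 * s ^ 2 = 0" by (simp add: Some mem_osc_plane_Some_iff)
  have "s * (3 * \<mu> + s ^ 2) = - (0 - 3 * s * \<mu> + 3 * s ^ 2 * 0 - s ^ 3 * 1)"
    by (simp add: algebra_simps power2_eq_square power3_eq_cube)
  also have "\<dots> = 0" using assms(2) unfolding Some mem_osc_plane_Some_iff by simp
  finally have "s * (3 * \<mu> + s ^ 2) = 0" .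
  moreover have "s \<noteq> 0" using s by auto
  ultimately have "3 * \<mu> + s ^ 2 = 0" by simp
  have "9 * \<mu> = 3 * (3 * \<mu> + s ^ 2) - (1 + 3 * s ^ 2) + 1" by (simp add: algebra_simps)
  also have "\<dots> = 1" using s \<open>3 * \<mu> + s ^ 2 = 0\<close> by simp
  finally have "9 * \<mu> = 1" .
  then have "(9::'a) \<noteq> 0" by auto
  with \<open>9 * \<mu> = 1\<close> have "\<mu> = 1/9" by (simp add: eq_divide_eq mult.commute)
  moreover have "3 * s ^ 2 = -1" using s by (simp add: eq_neg_iff_add_eq_0 add.commute)
  ultimately show ?thesis using Some by blast
qed

lemma osc_plane_inter_opposite:
  fixes s :: "'a::field"
  assumes two: "(2::'a) \<noteq> 0" and s: "3 * s ^ 2 = -1"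
  shows "osc_plane (Some s) \<inter> osc_plane (Some (- s)) = ell (1/9)"
proof (rule Set.set_eqI)
  fix x :: "'a vec4"
  obtain x0 x1 x2 x3 where x: "x = (x0, x1, x2, x3)" by (cases x)
  have "s \<noteq> 0" and three: "(3::'a) \<noteq> 0" using s by auto
  define A B where "A = x0 - x2" and "B = 3 * x1 + s ^ 2 * x3"
  have s': "3 * s ^ 2 + 1 = 0" using s by simp
  have "x0 - 3 * s * x1 + 3 * s ^ 2 * x2 - s ^ 3 * x3 = A - s * B + (3 * s ^ 2 + 1) * x2"
    and "x0 - 3 * (- s) * x1 + 3 * (- s) ^ 2 * x2 - (- s) ^ 3 * x3 = A + s * B + (3 * s ^ 2 + 1) * x2"
    by (simp_all add: A_def B_def algebra_simps power2_eq_square power3_eq_cube)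
  then have "x \<in> osc_plane (Some s) \<inter> osc_plane (Some (- s)) \<longleftrightarrow> A - s * B = 0 \<and> A + s * B = 0"
    unfolding x Int_iff mem_osc_plane_Some_iff s' by simp
  also have "\<dots> \<longleftrightarrow> A = 0 \<and> B = 0" using two \<open>s \<noteq> 0\<close> by (rule diff_add_eq_0_iff)
  also have "\<dots> \<longleftrightarrow> x \<in> ell (1/9)"
  proof -
    have "(9::'a) = 3 * 3" by simp
    then have "(9::'a) \<noteq> 0" using three by (metis mult_eq_0_iff)
    have "3 * B = 9 * x1 - x3" using s by (simp add: B_def algebra_simps)
    then have "B = 0 \<longleftrightarrow> 9 * x1 = x3" using three by (metis eq_iff_diff_eq_0 mult_eq_0_iff)
    also have "\<dots> \<longleftrightarrow> x1 = x3 * (1/9)" using \<open>(9::'a) \<noteq> 0\<close> by (auto simp: field_simps)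
    finally show ?thesis by (simp add: x mem_ell_iff A_def)
  qed
  finally show "x \<in> osc_plane (Some s) \<inter> osc_plane (Some (- s)) \<longleftrightarrow> x \<in> ell (1/9)" .
qed

lemma real_axis_ell_iff:
  fixes \<mu> :: "'a::field"
  shows "real_axis (ell \<mu>) \<longleftrightarrow> (2::'a) \<noteq> 0 \<and> (\<exists>s::'a. 3 * s ^ 2 = -1) \<and> \<mu> = 1/9"
proof
  assume "real_axis (ell \<mu>)"
  then obtain t1 t2 where "t1 \<noteq> t2" and L: "ell \<mu> = osc_plane t1 \<inter> osc_plane t2"
    by (auto simp: real_axis_def)
  have "(1, 0, 1, 0) \<in> osc_plane t" and "(0, \<mu>, 0, 1) \<in> osc_plane t" if "t \<in> {t1, t2}" for t
    using L ell_base_points[of \<mu>] that by auto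
  then obtain s1 s2 where "t1 = Some s1" "t2 = Some s2" and s1: "3 * s1 ^ 2 = -1" and s2: "3 * s2 ^ 2 = -1"
    and "\<mu> = 1/9"
    using osc_plane_through_base_points by (metis insertI1 insertI2 singletonI)
  have "s1 \<noteq> s2" using \<open>t1 \<noteq> t2\<close> \<open>t1 = Some s1\<close> \<open>t2 = Some s2\<close> by simp
  have "(3::'a) \<noteq> 0" using s1 by auto
  then have "s1 ^ 2 = s2 ^ 2" using s1 s2 by (metis mult_left_cancel)
  with \<open>s1 \<noteq> s2\<close> have "s1 \<noteq> - s1" by (metis power2_eq_iff)
  then have "(2::'a) \<noteq> 0" by (simp add: eq_uminus_iff)
  with s1 \<open>\<mu> = 1/9\<close> show "(2::'a) \<noteq> 0 \<and> (\<exists>s::'a. 3 * s ^ 2 = -1) \<and> \<mu> = 1/9" by blast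
next
  assume "(2::'a) \<noteq> 0 \<and> (\<exists>s::'a. 3 * s ^ 2 = -1) \<and> \<mu> = 1/9"
  then obtain s :: 'a where two: "(2::'a) \<noteq> 0" and s: "3 * s ^ 2 = -1" and "\<mu> = 1/9" by blast
  have "s \<noteq> - s" using two s by (auto simp: eq_uminus_iff)
  then show "real_axis (ell \<mu>)"
    unfolding real_axis_def using osc_plane_inter_opposite[OF two s] \<open>\<mu> = 1/9\<close> by blast
qed

lemma map4_mem_ell_iff:
  assumes "field_emb \<phi>"
  shows "map4 \<phi> x \<in> ell (\<phi> \<mu>) \<longleftrightarrow> x \<in> ell \<mu>"
proof -
  interpret field_hom \<phi> using assms by (rule field_hom_if_field_emb)
  obtain x0 x1 x2 x3 where x: "x = (x0, x1, x2, x3)" by (cases x)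
  show ?thesis by (simp add: x map4_def mem_ell_iff flip: hom_mult)
qed

lemma imag_axis_ell_iff:
  fixes \<phi> :: "'a::{finite,field} \<Rightarrow> 'b::{finite,field}" and \<mu> :: 'a
  assumes emb: "field_emb \<phi>" and card: "CARD('b) = CARD('a) ^ 2" and three: "(3::'a) \<noteq> 0"
  shows "imag_axis \<phi> (ell \<mu>) \<longleftrightarrow> \<not> (\<exists>s::'a. 3 * s ^ 2 = -1) \<and> \<mu> = 1/9"
proof -
  interpret field_hom \<phi> using emb by (rule field_hom_if_field_emb)
  have hom_ninth: "\<phi> (1/9) = 1/9" by (simp add: hom_distribs)
  show ?thesis
  proof
    assume "imag_axis \<phi> (ell \<mu>)"
    then obtain t where t: "t \<notin> range \<phi>"
      and L: "ell \<mu> = {x. map4 \<phi> x \<in> osc_plane (Some t) \<inter> osc_plane (Some (t ^ CARD('a)))}"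
      by (auto simp: imag_axis_def)
    have "map4 \<phi> (1, 0, 1, 0) \<in> osc_plane (Some t)" and "map4 \<phi> (0, \<mu>, 0, 1) \<in> osc_plane (Some t)"
      using L ell_base_points[of \<mu>] by blast+
    then have "(1, 0, 1, 0) \<in> osc_plane (Some t)" and "(0, \<phi> \<mu>, 0, 1) \<in> osc_plane (Some t)"
      by (simp_all add: map4_def)
    then obtain s where "Some t = Some s" and "3 * s ^ 2 = -1" and "\<phi> \<mu> = 1/9"
      using osc_plane_through_base_points by blast
    then have "3 * t ^ 2 = -1" and "\<phi> \<mu> = \<phi> (1/9)" unfolding hom_ninth by simp_all
    then show "\<not> (\<exists>s::'a. 3 * s ^ 2 = -1) \<and> \<mu> = 1/9"
      using t mem_range_field_emb_iff_ex_root[OF emb] injD[OF inj_f] by blast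
  next
    assume "\<not> (\<exists>s::'a. 3 * s ^ 2 = -1) \<and> \<mu> = 1/9"
    then have none: "\<not> (\<exists>s::'a. 3 * s ^ 2 = -1)" and mu: "\<mu> = 1/9" by blast+
    then have odd: "odd CARD('a)" using ex_three_mult_square_eq_minus_one_iff by blast
    obtain t where t2: "t ^ 2 = \<phi> (-1/3)" using ex_sqrt_in_quadratic_extension[OF emb card odd] by blast
    have "(3::'b) \<noteq> 0" using three by (metis hom_0_iff hom_numeral)
    with t2 have t: "3 * t ^ 2 = -1" by (simp add: hom_distribs)
    have "t \<notin> range \<phi>" using mem_range_field_emb_iff_ex_root[OF emb t] none by blast
    moreover have "t ^ CARD('a) = - t"
      using power_card_eq_uminus_if_square_in_range[OF emb \<open>t \<notin> range \<phi>\<close>] t2 by blast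
    moreover have "(2::'b) \<noteq> 0"
      using odd two_neq_zero_iff_odd_card[where 'a='a] by (metis hom_0_iff hom_numeral)
    ultimately have "{x. map4 \<phi> x \<in> osc_plane (Some t) \<inter> osc_plane (Some (t ^ CARD('a)))}
        = {x. map4 \<phi> x \<in> ell (\<phi> (1/9))}"
      unfolding hom_ninth using osc_plane_inter_opposite[OF _ t] by simp
    also have "\<dots> = ell \<mu>" unfolding mu using map4_mem_ell_iff[OF emb] by simp
    finally show "imag_axis \<phi> (ell \<mu>)"
      unfolding imag_axis_def using \<open>t \<notin> range \<phi>\<close> by blast
  qed
qed

theorem lemma4p3:
  fixes \<phi> :: "'a::{finite,field} \<Rightarrow> 'b::{finite,field}" and \<mu> :: 'a
  assumes "CARD('a) mod 3 \<noteq> 0"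
    and "CARD('b) = CARD('a)^2"
    and "field_emb \<phi>"
  shows "(imag_axis \<phi> (ell \<mu>) \<longleftrightarrow> odd CARD('a) \<and> CARD('a) mod 3 = 2 \<and> \<mu> = 1/9)
       \<and> (real_axis (ell \<mu>) \<longleftrightarrow> odd CARD('a) \<and> CARD('a) mod 3 = 1 \<and> \<mu> = 1/9)"
proof -
  have "(3::'a) \<noteq> 0"
    using assms(1) prime_dvd_card_if_of_nat_eq_0[of 3, where 'a='a] by auto
  moreover have "CARD('a) mod 3 = 1 \<or> CARD('a) mod 3 = 2" using assms(1) by linarith
  ultimately show ?thesis
    using imag_axis_ell_iff[OF assms(3,2)] real_axis_ell_iff[of \<mu>]
      two_neq_zero_iff_odd_card[where 'a='a] ex_three_mult_square_eq_minus_one_iff[where 'a='a]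
    by auto
qed

end
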